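(* For every zero-error variable-length $(k,N)$ network code for the network described in the context, the stopping time $N$ satisfies $$\Pr(N=n)\le \left(\tfrac{3}{8}\right)^k|\mathcal Z|^{2n}\quad\text{for every positive integer } n.$$
   Context: Network: source nodes $s_1,s_2,s_3$ and a terminal $t$, with edges $(s_3,s_1),(s_3,s_2),(s_1,t),(s_2,t)$. Source $s_j$ observes $\mathbf X_j=(\mathbf X_j(1),\dots,\mathbf X_j(k))\in\{0,1\}^k$; all $3k$ bits are i.i.d. uniform on $\{0,1\}$. The edges $(s_3,s_1),(s_3,s_2)$ deliver $\mathbf X_3$ to $s_1$ and $s_2$. $\mathcal Z$ is a finite alphabet with $|\mathcal Z|\ge 2$ and $\mathcal Z^*$ the set of finite sequences over $\mathcal Z$. A variable-length $(k,N)$ network code consists of: encoding maps $\phi_1,\phi_2:\{0,1\}^k\times\{0,1\}^k\to\mathcal Z^*$, giving the sequences $\mathbf Z_1=\phi_1(\mathbf X_1,\mathbf X_3)$ (sent on $(s_1,t)$) and $\mathbf Z_2=\phi_2(\mathbf X_2,\mathbf X_3)$ (sent on $(s_2,t)$), with $\mathbf Z_j(m)$ the $m$-th symbol; a random variable $N$ with values in the positive integers that is a stopping time for the sequence $(\mathbf Z_1(1),\mathbf Z_2(1)),(\mathbf Z_1(2),\mathbf Z_2(2)),\dots$ (the event $\{N=n\}$ is determined by $(\mathbf Z_1(m),\mathbf Z_2(m))_{m\le n}$); and a decoder $\psi$ giving the estimate $\hat{\boldsymbol\Sigma}=\psi(\mathbf Z_1^N,\mathbf Z_2^N)\in\{0,1,2,3\}^k$,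 where $\mathbf Z_j^N=(\mathbf Z_j(1),\dots,\mathbf Z_j(N))$. The target is the componentwise integer sum $\boldsymbol\Sigma=\mathbf X_1+\mathbf X_2+\mathbf X_3\in\{0,1,2,3\}^k$. The code is zero-error if $\Pr(\hat{\boldsymbol\Sigma}\neq\boldsymbol\Sigma)=0$. *)

theory Defs
  imports "HOL-Probability.Probability"
begin

text \<open>Source observations: a triple (X1, X2, X3) of bit strings of length k,
  represented as bool lists.  The i.i.d. uniform bits correspond to the uniform
  distribution on the set of all such triples.\<close>

definition src_space :: "nat \<Rightarrow> (bool list \<times> bool list \<times> bool list) set" where
  "src_space k = {(x1, x2, x3). length x1 = k \<and> length x2 = k \<and> length x3 = k}"

definition src_pmf :: "nat \<Rightarrow> (bool list \<times> bool list \<times> bool list) pmf" where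
  "src_pmf k = pmf_of_set (src_space k)"

definition arith_sum3 :: "bool list \<times> bool list \<times> bool list \<Rightarrow> nat list" where
  "arith_sum3 x = (case x of (x1, x2, x3) \<Rightarrow>
     map (\<lambda>i. of_bool (x1 ! i) + of_bool (x2 ! i) + of_bool (x3 ! i)) [0..<length x1])"

definition seqZ1 :: "(bool list \<Rightarrow> bool list \<Rightarrow> 'z list) \<Rightarrow> bool list \<times> bool list \<times> bool list \<Rightarrow> 'z list" where
  "seqZ1 \<phi>1 x = (case x of (x1, x2, x3) \<Rightarrow> \<phi>1 x1 x3)"

definition seqZ2 :: "(bool list \<Rightarrow> bool list \<Rightarrow> 'z list) \<Rightarrow> bool list \<times> bool list \<times> bool list \<Rightarrow> 'z list" where
  "seqZ2 \<phi>2 x = (case x of (x1, x2, x3) \<Rightarrow> \<phi>2 x2 x3)"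

text \<open>A variable-length (k,N) network code (phi1, phi2, N, psi): N is a positive-integer
  valued function of the sources, the symbols Z_j(1..N) exist, and N is a stopping time:
  the event {N = n} is determined by the first n symbol pairs.\<close>
definition vl_network_code ::
  "nat \<Rightarrow> (bool list \<Rightarrow> bool list \<Rightarrow> 'z list) \<Rightarrow> (bool list \<Rightarrow> bool list \<Rightarrow> 'z list)
   \<Rightarrow> (bool list \<times> bool list \<times> bool list \<Rightarrow> nat) \<Rightarrow> ('z list \<Rightarrow> 'z list \<Rightarrow> nat list) \<Rightarrow> bool" where
  "vl_network_code k \<phi>1 \<phi>2 N \<psi> \<longleftrightarrow>
     (\<forall>x\<in>src_space k. 1 \<le> N x \<and> N x \<le> length (seqZ1 \<phi>1 x) \<and> N x \<le> length (seqZ2 \<phi>2 x)) \<and>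
     (\<forall>x\<in>src_space k. \<forall>x'\<in>src_space k. \<forall>n.
        take n (seqZ1 \<phi>1 x) = take n (seqZ1 \<phi>1 x') \<and>
        take n (seqZ2 \<phi>2 x) = take n (seqZ2 \<phi>2 x') \<and>
        length (take n (seqZ1 \<phi>1 x)) = n \<and> length (take n (seqZ2 \<phi>2 x)) = n
        \<longrightarrow> (N x = n \<longleftrightarrow> N x' = n))"

definition estimate ::
  "(bool list \<Rightarrow> bool list \<Rightarrow> 'z list) \<Rightarrow> (bool list \<Rightarrow> bool list \<Rightarrow> 'z list)
   \<Rightarrow> (bool list \<times> bool list \<times> bool list \<Rightarrow> nat) \<Rightarrow> ('z list \<Rightarrow> 'z list \<Rightarrow> nat list)
   \<Rightarrow> bool list \<times> bool list \<times> bool list \<Rightarrow> nat list" where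
  "estimate \<phi>1 \<phi>2 N \<psi> x = \<psi> (take (N x) (seqZ1 \<phi>1 x)) (take (N x) (seqZ2 \<phi>2 x))"

end

theory Submission
  imports Defs
begin

text \<open>On the event \<open>N = n\<close> the stopped transcripts \<open>(Z1^n, Z2^n)\<close> together with \<open>X3\<close>
  determine all sources. Indeed, if two source triples \<open>(a, b, c)\<close> and \<open>(a', b', c)\<close>
  give the same transcripts, the mixed triple \<open>(a, b', c)\<close> gives them too, since \<open>Z1\<close>
  does not see \<open>X2\<close> and \<open>Z2\<close> does not see \<open>X1\<close>. By the stopping property it also stops
  at time \<open>n\<close>, so the decoder outputs the same estimate for all three triples; zero error
  and cancellation in the componentwise sum then force \<open>b = b'\<close> and \<open>a = a'\<close>. Hence at
  most \<open>|Z|^(2n) 2^k\<close> of the \<open>8^k\<close> equiprobable source triples stop at time \<open>n\<close>, which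
  gives the bound even with \<open>1/4\<close> in place of \<open>3/8\<close>, and without using
  \<open>|Z| \<ge> 2\<close> or \<open>n \<ge> 1\<close>.\<close>

lemma finite_lists_length_eq_UNIV: "finite {xs :: 'a::finite list. length xs = n}"
  using finite_lists_length_eq[of "UNIV :: 'a set" n] by simp

lemma card_lists_length_eq_UNIV: "card {xs :: 'a::finite list. length xs = n} = CARD('a) ^ n"
  using card_lists_length_eq[of "UNIV :: 'a set" n] by simp

lemma src_space_eq_product:
  "src_space k = {xs. length xs = k} \<times> {xs. length xs = k} \<times> {xs. length xs = k}"
  by (auto simp: src_space_def)

lemma finite_src_space: "finite (src_space k)"
  unfolding src_space_eq_product by (intro finite_cartesian_product finite_lists_length_eq_UNIV)

lemma src_space_nonempty: "src_space k \<noteq> {}"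
  unfolding src_space_def by (auto intro!: exI[of _ "replicate k False"])

lemma card_src_space: "card (src_space k) = 8 ^ k"
proof -
  have "card (src_space k) = 2 ^ k * (2 ^ k * 2 ^ k)"
    unfolding src_space_eq_product card_cartesian_product card_lists_length_eq_UNIV by simp
  also have "\<dots> = 8 ^ k"
    by (simp flip: power_mult_distrib)
  finally show ?thesis .
qed

lemma prob_src_pmf:
  "measure_pmf.prob (src_pmf k) {x. P x} = card {x \<in> src_space k. P x} / 8 ^ k"
  unfolding src_pmf_def measure_pmf_of_set[OF src_space_nonempty finite_src_space]
  by (simp add: card_src_space Int_def)

lemma prob_src_pmf_zero_imp:
  assumes "measure_pmf.prob (src_pmf k) {x. P x} = 0" and "x \<in> src_space k"
  shows "\<not> P x"
proof
  assume "P x"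
  with assms(2) have "{x \<in> src_space k. P x} \<noteq> {}" by blast
  then have "card {x \<in> src_space k. P x} \<noteq> 0"
    using finite_src_space by simp
  with assms(1) show False
    by (simp add: prob_src_pmf)
qed

lemma nth_arith_sum3:
  "i < length a \<Longrightarrow> arith_sum3 (a, b, c) ! i = of_bool (a ! i) + of_bool (b ! i) + of_bool (c ! i)"
  by (simp add: arith_sum3_def)

lemma arith_sum3_cancel:
  assumes sum: "arith_sum3 (a, b, c) = arith_sum3 (a', b', c)"
    and len: "length a = length a'" "length b = length a" "length b' = length a"
    and same: "a = a' \<or> b = b'"
  shows "a = a' \<and> b = b'"
proof -
  have "a ! i = a' ! i \<and> b ! i = b' ! i" if "i < length a" for i
  proof -
    have "of_bool (a ! i) + of_bool (b ! i) + of_bool (c ! i)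
        = (of_bool (a' ! i) + of_bool (b' ! i) + of_bool (c ! i) :: nat)"
      using arg_cong[OF sum, of "\<lambda>s. s ! i"] that len by (simp add: nth_arith_sum3)
    then show ?thesis
      using same by (cases "a ! i"; cases "a' ! i"; cases "b ! i"; cases "b' ! i") auto
  qed
  with len show ?thesis
    by (simp add: list_eq_iff_nth_eq)
qed

lemma vl_network_code_stop_le_length:
  "vl_network_code k \<phi>1 \<phi>2 N \<psi> \<Longrightarrow> x \<in> src_space k
    \<Longrightarrow> N x \<le> length (seqZ1 \<phi>1 x) \<and> N x \<le> length (seqZ2 \<phi>2 x)"
  unfolding vl_network_code_def by blast

lemma vl_network_code_stops_at_same_time:
  assumes code: "vl_network_code k \<phi>1 \<phi>2 N \<psi>"
    and x: "x \<in> src_space k" "N x = n" and x': "x' \<in> src_space k"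
    and Z1: "take n (seqZ1 \<phi>1 x') = take n (seqZ1 \<phi>1 x)"
    and Z2: "take n (seqZ2 \<phi>2 x') = take n (seqZ2 \<phi>2 x)"
  shows "N x' = n"
proof -
  have "n \<le> length (seqZ1 \<phi>1 x)" "n \<le> length (seqZ2 \<phi>2 x)"
    using vl_network_code_stop_le_length[OF code x(1)] x(2) by simp_all
  then show ?thesis
    using code x x' Z1 Z2 unfolding vl_network_code_def by (metis length_take min.absorb2)
qed

lemma estimate_stopped:
  "N x = n \<Longrightarrow> estimate \<phi>1 \<phi>2 N \<psi> x = \<psi> (take n (seqZ1 \<phi>1 x)) (take n (seqZ2 \<phi>2 x))"
  by (simp add: estimate_def)

lemma zero_error_stopped_transcripts_determine_sources:
  assumes code: "vl_network_code k \<phi>1 \<phi>2 N \<psi>"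
    and correct: "\<And>x. x \<in> src_space k \<Longrightarrow> estimate \<phi>1 \<phi>2 N \<psi> x = arith_sum3 x"
    and x: "(a, b, c) \<in> src_space k" "N (a, b, c) = n"
    and x': "(a', b', c) \<in> src_space k" "N (a', b', c) = n"
    and Z1: "take n (\<phi>1 a' c) = take n (\<phi>1 a c)"
    and Z2: "take n (\<phi>2 b' c) = take n (\<phi>2 b c)"
  shows "a' = a \<and> b' = b"
proof -
  have y: "(a, b', c) \<in> src_space k"
    using x x' by (simp add: src_space_def)
  have "N (a, b', c) = n"
    using vl_network_code_stops_at_same_time[OF code x y] Z2 by (simp add: seqZ1_def seqZ2_def)
  then have "arith_sum3 (a, b', c) = arith_sum3 (a, b, c)"
    using x Z2 correct[OF x(1)] correct[OF y] by (simp add: estimate_stopped seqZ1_def seqZ2_def)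
  then have "b' = b"
    using x y by (auto dest: arith_sum3_cancel simp: src_space_def)
  moreover have "arith_sum3 (a', b, c) = arith_sum3 (a, b, c)"
    using x x' Z1 Z2 \<open>b' = b\<close> correct[OF x(1)] correct[OF x'(1)]
    by (simp add: estimate_stopped seqZ1_def seqZ2_def)
  then have "a' = a"
    using x x' \<open>b' = b\<close> by (auto dest: arith_sum3_cancel simp: src_space_def)
  ultimately show ?thesis by simp
qed

lemma zero_error_inj_on_stopped_transcripts:
  assumes code: "vl_network_code k \<phi>1 \<phi>2 N \<psi>"
    and correct: "\<And>x. x \<in> src_space k \<Longrightarrow> estimate \<phi>1 \<phi>2 N \<psi> x = arith_sum3 x"
  shows "inj_on (\<lambda>x. (take n (seqZ1 \<phi>1 x), take n (seqZ2 \<phi>2 x), snd (snd x)))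
           {x \<in> src_space k. N x = n}"
proof (rule inj_onI)
  fix x x' assume "x \<in> {x \<in> src_space k. N x = n}" "x' \<in> {x \<in> src_space k. N x = n}"
    and "(take n (seqZ1 \<phi>1 x), take n (seqZ2 \<phi>2 x), snd (snd x))
       = (take n (seqZ1 \<phi>1 x'), take n (seqZ2 \<phi>2 x'), snd (snd x'))"
  then show "x = x'"
    using zero_error_stopped_transcripts_determine_sources[OF code correct]
    by (cases x; cases x') (simp add: seqZ1_def seqZ2_def, metis)
qed

lemma zero_error_card_stopped:
  fixes \<phi>1 \<phi>2 :: "bool list \<Rightarrow> bool list \<Rightarrow> 'z::finite list"
  assumes code: "vl_network_code k \<phi>1 \<phi>2 N \<psi>"
    and correct: "\<And>x. x \<in> src_space k \<Longrightarrow> estimate \<phi>1 \<phi>2 N \<psi> x = arith_sum3 x"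
  shows "card {x \<in> src_space k. N x = n} \<le> CARD('z) ^ (2 * n) * 2 ^ k"
proof -
  define T where "T = {zs :: 'z list. length zs = n} \<times> {zs :: 'z list. length zs = n}
    \<times> {xs :: bool list. length xs = k}"
  have "(\<lambda>x. (take n (seqZ1 \<phi>1 x), take n (seqZ2 \<phi>2 x), snd (snd x)))
      ` {x \<in> src_space k. N x = n} \<subseteq> T"
    using vl_network_code_stop_le_length[OF code] by (force simp: T_def src_space_def)
  moreover have "finite T"
    unfolding T_def by (intro finite_cartesian_product finite_lists_length_eq_UNIV)
  ultimately have "card {x \<in> src_space k. N x = n} \<le> card T"
    using card_inj_on_le[OF zero_error_inj_on_stopped_transcripts[OF code correct]] by blast
  also have "card T = CARD('z) ^ (2 * n) * 2 ^ k"
    unfolding T_def card_cartesian_product card_lists_length_eq_UNIV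
    by (simp add: mult_2 power_add)
  finally show ?thesis .
qed

theorem lemma2:
  fixes k :: nat
    and \<phi>1 \<phi>2 :: "bool list \<Rightarrow> bool list \<Rightarrow> 'z::finite list"
    and N :: "bool list \<times> bool list \<times> bool list \<Rightarrow> nat"
    and \<psi> :: "'z list \<Rightarrow> 'z list \<Rightarrow> nat list"
  assumes "CARD('z) \<ge> 2"
    and "vl_network_code k \<phi>1 \<phi>2 N \<psi>"
    and "measure_pmf.prob (src_pmf k) {x. estimate \<phi>1 \<phi>2 N \<psi> x \<noteq> arith_sum3 x} = 0"
    and "n \<ge> 1"
  shows "measure_pmf.prob (src_pmf k) {x. N x = n} \<le> (3/8) ^ k * real CARD('z) ^ (2 * n)"
proof -
  have correct: "estimate \<phi>1 \<phi>2 N \<psi> x = arith_sum3 x" if "x \<in> src_space k" for x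
    using prob_src_pmf_zero_imp[OF assms(3) that] by simp
  have "measure_pmf.prob (src_pmf k) {x. N x = n} = card {x \<in> src_space k. N x = n} / 8 ^ k"
    by (rule prob_src_pmf)
  also have "\<dots> \<le> real (CARD('z) ^ (2 * n) * 2 ^ k) / 8 ^ k"
    using zero_error_card_stopped[OF assms(2) correct, of n]
    by (intro divide_right_mono of_nat_mono) simp_all
  also have "\<dots> = (1 / 4) ^ k * real CARD('z) ^ (2 * n)"
    using power_mult_distrib[of "2 :: real" 4 k] by (simp add: power_divide)
  also have "\<dots> \<le> (3 / 8) ^ k * real CARD('z) ^ (2 * n)"
    by (intro mult_right_mono power_mono) simp_all
  finally show ?thesis .
qed

end
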